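(* There are absolute constants $\kappa_0\ge1$ and $c>0$ such that the following holds for every $\epsilon\in(0,1/4)$. Any quantum query algorithm which, given unitaries $\mathcal O_\rho,\mathcal O_\sigma$ preparing purifications of arbitrary mixed states $\rho,\sigma$ satisfying $\rho\ge I/\kappa_0$ and $\sigma\ge I/\kappa_0$, outputs an estimate of $F(\rho,\sigma)$ within additive error $\epsilon$ with probability at least $2/3$, must make at least $c/\epsilon$ queries to $\mathcal O_\rho,\mathcal O_\sigma$ on some such input. In other words, fidelity estimation to additive error $\epsilon$ requires $\Omega(1/\epsilon)$ queries even when $\kappa_\rho=\kappa_\sigma=\Theta(1)$.
   Context: The (Uhlmann) fidelity is $F(\rho,\sigma):=\operatorname{Tr}\big((\sigma^{1/2}\rho\sigma^{1/2})^{1/2}\big)$. A unitary $\mathcal O_\rho$ on $n+a$ qubits prepares a purification of $\rho$ if $\operatorname{Tr}_a(\mathcal O_\rho|0\rangle\langle0|\mathcal O_\rho^\dagger)=\rho$. A query means one use of any of $\mathcal O$, $\mathcal O^\dagger$, controlled-$\mathcal O$, controlled-$\mathcal O^\dagger$. Inequalities are in the Loewner order. *)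

theory Defs
  imports "HOL-Analysis.Analysis" "Jordan_Normal_Form.Matrix"
begin

definition adj :: "complex mat \<Rightarrow> complex mat" where
  "adj A = mat (dim_col A) (dim_row A) (\<lambda>(i,j). cnj (A $$ (j,i)))"

definition mtrace :: "complex mat \<Rightarrow> complex" where
  "mtrace A = (\<Sum>i<dim_row A. A $$ (i,i))"

definition is_unitary :: "nat \<Rightarrow> complex mat \<Rightarrow> bool" where
  "is_unitary d U \<longleftrightarrow> U \<in> carrier_mat d d \<and> U * adj U = 1\<^sub>m d \<and> adj U * U = 1\<^sub>m d"

definition psd :: "nat \<Rightarrow> complex mat \<Rightarrow> bool" where
  "psd d A \<longleftrightarrow> A \<in> carrier_mat d d \<and> adj A = A \<and>
     (\<forall>v :: nat \<Rightarrow> complex. 0 \<le> Re (\<Sum>i<d. \<Sum>j<d. cnj (v i) * A $$ (i,j) * v j))"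

definition loewner_ge :: "nat \<Rightarrow> complex mat \<Rightarrow> complex mat \<Rightarrow> bool" where
  "loewner_ge d A B \<longleftrightarrow> A \<in> carrier_mat d d \<and> B \<in> carrier_mat d d \<and> psd d (A - B)"

definition msqrt :: "nat \<Rightarrow> complex mat \<Rightarrow> complex mat" where
  "msqrt d A = (THE B. psd d B \<and> B * B = A)"

definition fidelity :: "nat \<Rightarrow> complex mat \<Rightarrow> complex mat \<Rightarrow> real" where
  "fidelity d \<rho> \<sigma> = Re (mtrace (msqrt d (msqrt d \<sigma> * \<rho> * msqrt d \<sigma>)))"

definition density :: "nat \<Rightarrow> complex mat \<Rightarrow> bool" where
  "density d \<rho> \<longleftrightarrow> psd d \<rho> \<and> mtrace \<rho> = 1"

definition kron :: "complex mat \<Rightarrow> complex mat \<Rightarrow> complex mat" where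
  "kron A B = mat (dim_row A * dim_row B) (dim_col A * dim_col B)
     (\<lambda>(i,j). A $$ (i div dim_row B, j div dim_col B) * B $$ (i mod dim_row B, j mod dim_col B))"

definition basis_proj :: "nat \<Rightarrow> nat \<Rightarrow> complex mat" where
  "basis_proj d b = mat d d (\<lambda>(i,j). if i = b \<and> j = b then 1 else 0)"

definition ptrace2 :: "nat \<Rightarrow> nat \<Rightarrow> complex mat \<Rightarrow> complex mat" where
  "ptrace2 dS dA M = mat dS dS (\<lambda>(i,j). \<Sum>k<dA. M $$ (i * dA + k, j * dA + k))"

text \<open>O (on n system qubits followed by a ancilla qubits) prepares a purification of rho.\<close>
definition prepares :: "nat \<Rightarrow> nat \<Rightarrow> complex mat \<Rightarrow> complex mat \<Rightarrow> bool" where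
  "prepares n a W \<rho> \<longleftrightarrow> is_unitary (2^(n+a)) W \<and>
     ptrace2 (2^n) (2^a) (W * basis_proj (2^(n+a)) 0 * adj W) = \<rho>"

datatype qkind = QPlain | QInv | QCtrl | QCtrlInv

text \<open>A query algorithm on m qubits with T queries: unitaries U 0, ..., U T, and
  the (t+1)-th query (t < T) is given by qry t = (use_rho, kind): which oracle and
  which of O, O^dagger, controlled-O, controlled-O^dagger is used. Since arbitrary
  unitaries are interleaved, the oracle acts w.l.o.g. on the first k qubits, and a
  controlled query uses qubit 0 as control and the following k qubits as target.
  At the end all m qubits are measured in the computational basis; outcome x yields
  estimate out x.\<close>
record qalg =
  ws  :: nat
  nq  :: nat
  U   :: "nat \<Rightarrow> complex mat"
  qry :: "nat \<Rightarrow> bool \<times> qkind"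
  out :: "nat \<Rightarrow> real"

definition embed :: "nat \<Rightarrow> nat \<Rightarrow> qkind \<Rightarrow> complex mat \<Rightarrow> complex mat" where
  "embed m k q W = (case q of
      QPlain \<Rightarrow> kron W (1\<^sub>m (2^(m-k)))
    | QInv \<Rightarrow> kron (adj W) (1\<^sub>m (2^(m-k)))
    | QCtrl \<Rightarrow> kron (basis_proj 2 0) (1\<^sub>m (2^(m-1)))
                + kron (basis_proj 2 1) (kron W (1\<^sub>m (2^(m-1-k))))
    | QCtrlInv \<Rightarrow> kron (basis_proj 2 0) (1\<^sub>m (2^(m-1)))
                + kron (basis_proj 2 1) (kron (adj W) (1\<^sub>m (2^(m-1-k)))))"

definition query_op :: "qalg \<Rightarrow> nat \<Rightarrow> nat \<Rightarrow> nat \<Rightarrow> complex mat \<Rightarrow> complex mat \<Rightarrow> nat \<Rightarrow> complex mat" where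
  "query_op A n a1 a2 Or Os t = (case qry A t of
      (True, q) \<Rightarrow> embed (ws A) (n + a1) q Or
    | (False, q) \<Rightarrow> embed (ws A) (n + a2) q Os)"

fun run_op :: "qalg \<Rightarrow> nat \<Rightarrow> nat \<Rightarrow> nat \<Rightarrow> complex mat \<Rightarrow> complex mat \<Rightarrow> nat \<Rightarrow> complex mat" where
  "run_op A n a1 a2 Or Os 0 = U A 0"
| "run_op A n a1 a2 Or Os (Suc t) = U A (Suc t) * query_op A n a1 a2 Or Os t * run_op A n a1 a2 Or Os t"

definition success_prob :: "qalg \<Rightarrow> nat \<Rightarrow> nat \<Rightarrow> nat \<Rightarrow> complex mat \<Rightarrow> complex mat \<Rightarrow> real \<Rightarrow> real \<Rightarrow> real" where
  "success_prob A n a1 a2 Or Os f \<epsilon> =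
     (\<Sum>x \<in> {x. x < 2^(ws A) \<and> \<bar>out A x - f\<bar> \<le> \<epsilon>}.
        (cmod (run_op A n a1 a2 Or Os (nq A) $$ (x, 0)))\<^sup>2)"

text \<open>Well-formed algorithm for oracles of the given format: enough workspace for a
  controlled query, and all interleaved operations unitary.\<close>
definition valid_alg :: "nat \<Rightarrow> nat \<Rightarrow> nat \<Rightarrow> qalg \<Rightarrow> bool" where
  "valid_alg n a1 a2 A \<longleftrightarrow> n + max a1 a2 + 1 \<le> ws A \<and>
     (\<forall>t \<le> nq A. is_unitary (2^(ws A)) (U A t))"

definition estimates_fidelity :: "real \<Rightarrow> nat \<Rightarrow> nat \<Rightarrow> nat \<Rightarrow> real \<Rightarrow> qalg \<Rightarrow> bool" where
  "estimates_fidelity \<kappa>0 n a1 a2 \<epsilon> A \<longleftrightarrow>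
     (\<forall>Or Os \<rho> \<sigma>.
        density (2^n) \<rho> \<and> density (2^n) \<sigma> \<and>
        prepares n a1 Or \<rho> \<and> prepares n a2 Os \<sigma> \<and>
        loewner_ge (2^n) \<rho> ((1 / complex_of_real \<kappa>0) \<cdot>\<^sub>m 1\<^sub>m (2^n)) \<and>
        loewner_ge (2^n) \<sigma> ((1 / complex_of_real \<kappa>0) \<cdot>\<^sub>m 1\<^sub>m (2^n))
      \<longrightarrow> success_prob A n a1 a2 Or Os (fidelity (2^n) \<rho> \<sigma>) \<epsilon> \<ge> 2/3)"

end

theory Submission
  imports Defs
begin

text \<open>The hard instances are single-qubit diagonal states. Fix
  \<open>\<rho> = diag(cos\<^sup>2 \<theta>\<^sub>0, sin\<^sup>2 \<theta>\<^sub>0)\<close> and let \<open>\<sigma>\<^sub>\<theta> = diag(cos\<^sup>2 \<theta>, sin\<^sup>2 \<theta>)\<close>; both are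
  purified by a plane rotation by the respective angle, and \<open>F(\<rho>, \<sigma>\<^sub>\<theta>) = cos(\<theta> - \<theta>\<^sub>0)\<close>.
  Two oracles for \<open>\<sigma>\<^sub>\<theta>\<close> and \<open>\<sigma>\<^sub>\<theta>\<^sub>'\<close> are \<open>|\<theta> - \<theta>'|\<close>-close in operator norm, so by the hybrid
  argument the final states of a \<open>T\<close>-query algorithm on the two inputs are \<open>T |\<theta> - \<theta>'|\<close>-close.
  Choosing \<open>\<theta>' - \<theta>\<close> of order \<open>\<epsilon>\<close> where the cosine has slope bounded away from zero, the two
  fidelities differ by more than \<open>2\<epsilon>\<close>, so an estimator succeeding with probability \<open>2/3\<close>
  on both inputs must produce final states at distance at least \<open>1/6\<close>; hence \<open>T = \<Omega>(1/\<epsilon>)\<close>.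
  With all states bounded away from the boundary of the Bloch sphere, \<open>\<kappa>\<^sub>0 = 100\<close> suffices.\<close>

text \<open>Vectors of \<open>\<complex>\<^sup>N\<close> are coordinate functions \<open>nat \<Rightarrow> complex\<close>, of which only the
  first \<open>N\<close> entries matter; this avoids carrying dimension side conditions for vectors.\<close>

definition mat_app :: "complex mat \<Rightarrow> (nat \<Rightarrow> complex) \<Rightarrow> nat \<Rightarrow> complex" where
  "mat_app M v = (\<lambda>i. \<Sum>j<dim_col M. M $$ (i,j) * v j)"

definition vnorm_sq :: "nat \<Rightarrow> (nat \<Rightarrow> complex) \<Rightarrow> real" where
  "vnorm_sq N v = (\<Sum>i<N. (cmod (v i))\<^sup>2)"

definition vnorm :: "nat \<Rightarrow> (nat \<Rightarrow> complex) \<Rightarrow> real" where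
  "vnorm N v = sqrt (vnorm_sq N v)"

definition op_dist_le :: "nat \<Rightarrow> complex mat \<Rightarrow> complex mat \<Rightarrow> real \<Rightarrow> bool" where
  "op_dist_le N X Y \<delta> \<longleftrightarrow>
     (\<forall>u. vnorm_sq N (\<lambda>i. mat_app X u i - mat_app Y u i) \<le> \<delta>\<^sup>2 * vnorm_sq N u)"

definition contraction :: "nat \<Rightarrow> complex mat \<Rightarrow> bool" where
  "contraction N X \<longleftrightarrow> (\<forall>u. vnorm_sq N (mat_app X u) \<le> vnorm_sq N u)"

definition basis0 :: "nat \<Rightarrow> complex" where
  "basis0 = (\<lambda>j. if j = 0 then 1 else 0)"

lemma vnorm_sq_nonneg: "0 \<le> vnorm_sq N v"
  by (simp add: vnorm_sq_def sum_nonneg)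

lemma vnorm_nonneg: "0 \<le> vnorm N v"
  unfolding vnorm_def using vnorm_sq_nonneg by simp

lemma vnorm_eq_L2_set: "vnorm N v = L2_set (\<lambda>i. cmod (v i)) {..<N}"
  by (simp add: vnorm_def vnorm_sq_def L2_set_def)

lemma vnorm_sq_cong: "(\<And>i. i < N \<Longrightarrow> u i = w i) \<Longrightarrow> vnorm_sq N u = vnorm_sq N w"
  unfolding vnorm_sq_def by (rule sum.cong) auto

lemma vnorm_cong: "(\<And>i. i < N \<Longrightarrow> u i = w i) \<Longrightarrow> vnorm N u = vnorm N w"
  unfolding vnorm_def using vnorm_sq_cong by metis

lemma vnorm_le_1_imp_vnorm_sq_le_1: "vnorm N v \<le> 1 \<Longrightarrow> vnorm_sq N v \<le> 1"
  unfolding vnorm_def by simp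

lemma vnorm_triangle: "vnorm N (\<lambda>i. u i + w i) \<le> vnorm N u + vnorm N w"
proof -
  have "vnorm N (\<lambda>i. u i + w i) \<le> L2_set (\<lambda>i. cmod (u i) + cmod (w i)) {..<N}"
    unfolding vnorm_eq_L2_set by (rule L2_set_mono) (auto intro: norm_triangle_ineq)
  also have "\<dots> \<le> vnorm N u + vnorm N w"
    unfolding vnorm_eq_L2_set by (rule L2_set_triangle_ineq)
  finally show ?thesis .
qed

lemma vnorm_sq_basis0:
  assumes "0 < N"
  shows "vnorm_sq N basis0 = 1"
proof -
  have "vnorm_sq N basis0 = (\<Sum>i<N. if i = 0 then 1 else 0)"
    unfolding vnorm_sq_def basis0_def by (intro sum.cong) auto
  then show ?thesis using assms by (simp add: sum.delta')
qed

lemma op_dist_le_vnorm: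
  assumes "op_dist_le N X Y \<delta>" "0 \<le> \<delta>"
  shows "vnorm N (\<lambda>i. mat_app X u i - mat_app Y u i) \<le> \<delta> * vnorm N u"
proof -
  have "vnorm N (\<lambda>i. mat_app X u i - mat_app Y u i) \<le> sqrt (\<delta>\<^sup>2 * vnorm_sq N u)"
    using assms(1) unfolding op_dist_le_def vnorm_def by (simp add: real_sqrt_le_mono)
  also have "\<dots> = \<delta> * vnorm N u" using assms(2) by (simp add: real_sqrt_mult vnorm_def)
  finally show ?thesis .
qed

lemma op_dist_le_refl: "op_dist_le N X X \<delta>"
  unfolding op_dist_le_def vnorm_sq_def by (simp add: sum_nonneg)

lemma contraction_vnorm: "contraction N X \<Longrightarrow> vnorm N (mat_app X u) \<le> vnorm N u"
  unfolding contraction_def vnorm_def by (simp add: real_sqrt_le_mono)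

section \<open>Matrices acting on coordinate vectors\<close>

lemma mat_app_diff: "mat_app X (\<lambda>j. u j - w j) i = mat_app X u i - mat_app X w i"
  unfolding mat_app_def by (simp add: right_diff_distrib sum_subtractf)

lemma mat_app_add_mat:
  assumes "dim_col X = dim_col Y" "i < dim_row Y"
  shows "mat_app (X + Y) v i = mat_app X v i + mat_app Y v i"
  unfolding mat_app_def using assms by (simp add: distrib_right sum.distrib)

lemma index_mult_mat_app:
  assumes "dim_col A = dim_row B" "i < dim_row A" "j < dim_col B"
  shows "(A * B) $$ (i,j) = mat_app A (\<lambda>k. B $$ (k,j)) i"
  using assms by (simp add: mat_app_def scalar_prod_def atLeast0LessThan mult.commute)

lemma mat_app_mult:
  assumes "dim_col A = dim_row B" "i < dim_row A"
  shows "mat_app (A * B) v i = mat_app A (mat_app B v) i"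
proof -
  have "mat_app (A * B) v i = (\<Sum>j<dim_col B. (\<Sum>k<dim_row B. A$$(i,k) * B$$(k,j)) * v j)"
    unfolding mat_app_def using assms
    by (auto simp: scalar_prod_def atLeast0LessThan intro!: sum.cong)
  also have "\<dots> = (\<Sum>j<dim_col B. \<Sum>k<dim_row B. A$$(i,k) * (B$$(k,j) * v j))"
    by (simp add: sum_distrib_right mult.assoc)
  also have "\<dots> = (\<Sum>k<dim_row B. \<Sum>j<dim_col B. A$$(i,k) * (B$$(k,j) * v j))"
    by (rule sum.swap)
  also have "\<dots> = (\<Sum>k<dim_row B. A$$(i,k) * (\<Sum>j<dim_col B. B$$(k,j) * v j))"
    by (simp add: sum_distrib_left)
  finally show ?thesis using assms by (simp add: mat_app_def)
qed

lemma mat_app_basis0: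
  assumes "0 < dim_col M"
  shows "mat_app M basis0 i = M $$ (i, 0)"
proof -
  have "mat_app M basis0 i = (\<Sum>j<dim_col M. if j = 0 then M $$ (i, j) else 0)"
    unfolding mat_app_def basis0_def by (intro sum.cong) auto
  then show ?thesis using assms by (simp add: sum.delta')
qed

lemma mat_app_one:
  assumes "j < N"
  shows "mat_app (1\<^sub>m N) w j = w j"
proof -
  have "mat_app (1\<^sub>m N) w j = (\<Sum>r<N. if r = j then w r else 0)"
    unfolding mat_app_def using assms by (intro sum.cong) auto
  then show ?thesis using assms by (simp add: sum.delta)
qed

lemma vnorm_sq_eq_sum_cnj_mult: "complex_of_real (vnorm_sq N v) = (\<Sum>i<N. cnj (v i) * v i)"
  unfolding vnorm_sq_def of_real_sum
  by (rule sum.cong) (simp_all only: complex_norm_square mult.commute)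

lemma isometry_vnorm_sq:
  assumes X: "X \<in> carrier_mat N N" and U: "adj X * X = 1\<^sub>m N"
  shows "vnorm_sq N (mat_app X v) = vnorm_sq N v"
proof -
  have orth: "(\<Sum>i<N. cnj (X$$(i,j)) * X$$(i,k)) = (if j = k then 1 else 0)"
    if "j < N" "k < N" for j k
  proof -
    have "(adj X * X) $$ (j,k) = (\<Sum>i<N. cnj (X$$(i,j)) * X$$(i,k))"
      using X that by (simp add: adj_def scalar_prod_def atLeast0LessThan)
    then show ?thesis using U that by simp
  qed
  have "complex_of_real (vnorm_sq N (mat_app X v))
      = (\<Sum>i<N. (\<Sum>j<N. cnj (X$$(i,j)) * cnj (v j)) * (\<Sum>k<N. X$$(i,k) * v k))"
    unfolding vnorm_sq_eq_sum_cnj_mult mat_app_def using X by simp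
  also have "\<dots> = (\<Sum>i<N. \<Sum>j<N. \<Sum>k<N. cnj (v j) * v k * (cnj (X$$(i,j)) * X$$(i,k)))"
    by (simp only: sum_product) (intro sum.cong refl, simp add: mult_ac)
  also have "\<dots> = (\<Sum>j<N. \<Sum>k<N. \<Sum>i<N. cnj (v j) * v k * (cnj (X$$(i,j)) * X$$(i,k)))"
    by (subst sum.swap) (rule sum.cong[OF refl], rule sum.swap)
  also have "\<dots> = (\<Sum>j<N. \<Sum>k<N. if j = k then cnj (v j) * v k else 0)"
    by (intro sum.cong refl) (simp add: sum_distrib_left[symmetric] orth del: sum_distrib_left)
  also have "\<dots> = (\<Sum>j<N. cnj (v j) * v j)"
    by (simp add: sum.delta)
  also have "\<dots> = complex_of_real (vnorm_sq N v)" by (simp add: vnorm_sq_eq_sum_cnj_mult)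
  finally show ?thesis by (simp only: of_real_eq_iff)
qed

lemma adj_carrier: "W \<in> carrier_mat d d \<Longrightarrow> adj W \<in> carrier_mat d d"
  unfolding adj_def by auto

lemma adj_adj: "W \<in> carrier_mat d d \<Longrightarrow> adj (adj W) = W"
  unfolding adj_def by (intro eq_matI) auto

lemma unitary_contraction:
  assumes "is_unitary d W"
  shows "contraction d W" "contraction d (adj W)"
proof -
  have W: "W \<in> carrier_mat d d" and U1: "W * adj W = 1\<^sub>m d" and U2: "adj W * W = 1\<^sub>m d"
    using assms unfolding is_unitary_def by auto
  show "contraction d W" unfolding contraction_def using isometry_vnorm_sq[OF W U2] by simp
  have "adj (adj W) * adj W = 1\<^sub>m d" using U1 adj_adj[OF W] by simp
  then show "contraction d (adj W)"
    unfolding contraction_def using isometry_vnorm_sq[OF adj_carrier[OF W]] by simp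
qed

lemma contraction_mult:
  assumes X: "X \<in> carrier_mat N N" and Y: "Y \<in> carrier_mat N N"
    and "contraction N X" "contraction N Y"
  shows "contraction N (X * Y)"
  unfolding contraction_def
proof
  fix u
  have "vnorm_sq N (mat_app (X * Y) u) = vnorm_sq N (mat_app X (mat_app Y u))"
    using X Y by (intro vnorm_sq_cong mat_app_mult) auto
  also have "\<dots> \<le> vnorm_sq N (mat_app Y u)" using assms(3) unfolding contraction_def by blast
  also have "\<dots> \<le> vnorm_sq N u" using assms(4) unfolding contraction_def by blast
  finally show "vnorm_sq N (mat_app (X * Y) u) \<le> vnorm_sq N u" .
qed

section \<open>Tensor products with the identity and controlled operators\<close>

lemma sum_lessThan_mult_blocks:
  fixes f :: "nat \<Rightarrow> 'a::comm_monoid_add"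
  shows "(\<Sum>i<a * b. f i) = (\<Sum>p<a. \<Sum>r<b. f (p * b + r))"
proof -
  have "(\<Sum>i\<in>{p * b..<p * b + b}. f i) = (\<Sum>r<b. f (p * b + r))" for p
    using sum.shift_bounds_nat_ivl[of f 0 "p * b" b] by (simp add: atLeast0LessThan add.commute)
  then show ?thesis using sum.nat_group[of f b a] by simp
qed

lemma block_div_mod:
  assumes "r < (b::nat)"
  shows "(p * b + r) div b = p" "(p * b + r) mod b = r"
  using assms by (auto simp: add.commute[of "p * b"])

lemma block_index_less:
  assumes "p < (a::nat)" "r < b"
  shows "p * b + r < a * b"
proof -
  have "p * b + r < Suc p * b" using assms by simp
  also have "\<dots> \<le> a * b" using assms by (intro mult_le_mono1) simp
  finally show ?thesis .
qed

lemma vnorm_sq_blocks: "vnorm_sq (a * b) w = (\<Sum>r<b. vnorm_sq a (\<lambda>p. w (p * b + r)))"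
  unfolding vnorm_sq_def by (subst sum_lessThan_mult_blocks) (rule sum.swap)

lemma vnorm_sq_halves: "vnorm_sq (2 * H) w = vnorm_sq H w + vnorm_sq H (\<lambda>r. w (H + r))"
  unfolding vnorm_sq_def by (subst sum_lessThan_mult_blocks) (simp add: numeral_2_eq_2)

lemma sum_lessThan_2: "(\<Sum>p<(2::nat). f p) = f 0 + f 1"
  by (simp add: numeral_2_eq_2)

lemma kron_carrier:
  assumes "A \<in> carrier_mat a a" "B \<in> carrier_mat b b"
  shows "kron A B \<in> carrier_mat (a * b) (a * b)"
  using assms unfolding kron_def by auto

lemma basis_proj_carrier: "basis_proj d b \<in> carrier_mat d d"
  by (simp add: basis_proj_def)

lemma basis_proj_index:
  "x < d \<Longrightarrow> y < d \<Longrightarrow> basis_proj d c $$ (x,y) = (if x = c \<and> y = c then 1 else 0)"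
  by (simp add: basis_proj_def)

lemma mat_app_kron:
  assumes X: "X \<in> carrier_mat a a" and B: "B \<in> carrier_mat b b" and i: "i < a * b"
  shows "mat_app (kron X B) v i
    = (\<Sum>p<a. X $$ (i div b, p) * (\<Sum>r<b. B $$ (i mod b, r) * v (p * b + r)))"
proof -
  have "mat_app (kron X B) v i
      = (\<Sum>j<a * b. X $$ (i div b, j div b) * B $$ (i mod b, j mod b) * v j)"
    unfolding mat_app_def kron_def using X B i by (intro sum.cong) auto
  also have "\<dots> = (\<Sum>p<a. \<Sum>r<b. X $$ (i div b, p) * B $$ (i mod b, r) * v (p * b + r))"
    by (subst sum_lessThan_mult_blocks) (intro sum.cong refl, simp add: block_div_mod)
  finally show ?thesis by (simp add: sum_distrib_left mult.assoc)
qed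

lemma mat_app_kron_one:
  assumes X: "X \<in> carrier_mat a a" and i: "i < a * b"
  shows "mat_app (kron X (1\<^sub>m b)) v i = mat_app X (\<lambda>p. v (p * b + i mod b)) (i div b)"
proof -
  have im: "i mod b < b" using i by (cases b) auto
  have "(\<Sum>r<b. 1\<^sub>m b $$ (i mod b, r) * v (p * b + r)) = v (p * b + i mod b)" for p
  proof -
    have "(\<Sum>r<b. 1\<^sub>m b $$ (i mod b, r) * v (p * b + r))
        = (\<Sum>r<b. if r = i mod b then v (p * b + r) else 0)"
      using im by (intro sum.cong) auto
    then show ?thesis using im by (simp add: sum.delta)
  qed
  then show ?thesis using mat_app_kron[OF X one_carrier_mat i] X by (simp add: mat_app_def)
qed

text \<open>An operator \<open>X \<otimes> I\<close> acts as \<open>X\<close> on each of the \<open>b\<close> interleaved slices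
  \<open>p \<mapsto> v (p * b + r)\<close>, so its bounds follow slice by slice.\<close>

lemma kron_one_op_dist_le:
  assumes X: "X \<in> carrier_mat a a" and Y: "Y \<in> carrier_mat a a" and XY: "op_dist_le a X Y \<delta>"
  shows "op_dist_le (a * b) (kron X (1\<^sub>m b)) (kron Y (1\<^sub>m b)) \<delta>"
  unfolding op_dist_le_def
proof
  fix v :: "nat \<Rightarrow> complex"
  let ?s = "\<lambda>r p. v (p * b + r)"
  have "vnorm_sq (a * b) (\<lambda>i. mat_app (kron X (1\<^sub>m b)) v i - mat_app (kron Y (1\<^sub>m b)) v i)
      = (\<Sum>r<b. vnorm_sq a (\<lambda>p. mat_app X (?s r) p - mat_app Y (?s r) p))"
    unfolding vnorm_sq_blocks
    by (intro sum.cong refl vnorm_sq_cong)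
      (simp add: mat_app_kron_one[OF X] mat_app_kron_one[OF Y] block_div_mod block_index_less)
  also have "\<dots> \<le> (\<Sum>r<b. \<delta>\<^sup>2 * vnorm_sq a (?s r))"
    using XY unfolding op_dist_le_def by (intro sum_mono) auto
  also have "\<dots> = \<delta>\<^sup>2 * vnorm_sq (a * b) v" by (simp add: vnorm_sq_blocks sum_distrib_left)
  finally show "vnorm_sq (a * b) (\<lambda>i. mat_app (kron X (1\<^sub>m b)) v i - mat_app (kron Y (1\<^sub>m b)) v i)
      \<le> \<delta>\<^sup>2 * vnorm_sq (a * b) v" .
qed

lemma kron_one_contraction:
  assumes X: "X \<in> carrier_mat a a" and "contraction a X"
  shows "contraction (a * b) (kron X (1\<^sub>m b))"
  unfolding contraction_def
proof
  fix v :: "nat \<Rightarrow> complex"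
  let ?s = "\<lambda>r p. v (p * b + r)"
  have "vnorm_sq (a * b) (mat_app (kron X (1\<^sub>m b)) v) = (\<Sum>r<b. vnorm_sq a (mat_app X (?s r)))"
    unfolding vnorm_sq_blocks
    by (intro sum.cong refl vnorm_sq_cong)
      (simp add: mat_app_kron_one[OF X] block_div_mod block_index_less)
  also have "\<dots> \<le> (\<Sum>r<b. vnorm_sq a (?s r))"
    using assms(2) unfolding contraction_def by (intro sum_mono) auto
  also have "\<dots> = vnorm_sq (a * b) v" by (simp add: vnorm_sq_blocks)
  finally show "vnorm_sq (a * b) (mat_app (kron X (1\<^sub>m b)) v) \<le> vnorm_sq (a * b) v" .
qed

definition ctrl_mat :: "nat \<Rightarrow> complex mat \<Rightarrow> complex mat" where
  "ctrl_mat H Y = kron (basis_proj 2 0) (1\<^sub>m H) + kron (basis_proj 2 1) Y"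

lemma ctrl_mat_carrier: "Y \<in> carrier_mat H H \<Longrightarrow> ctrl_mat H Y \<in> carrier_mat (2 * H) (2 * H)"
  unfolding ctrl_mat_def using kron_carrier basis_proj_carrier
  by (metis add_carrier_mat one_carrier_mat)

lemma mat_app_kron_basis_proj:
  assumes c: "c < 2" and B: "B \<in> carrier_mat H H" and i: "i < 2 * H"
  shows "mat_app (kron (basis_proj 2 c) B) v i
    = (if i div H = c then mat_app B (\<lambda>r. v (c * H + r)) (i mod H) else 0)"
proof -
  let ?T = "\<lambda>p. (\<Sum>r<H. B $$ (i mod H, r) * v (p * H + r))"
  have id: "i div H < 2" using i by (simp add: less_mult_imp_div_less)
  have "mat_app (kron (basis_proj 2 c) B) v i = (\<Sum>p<2. basis_proj 2 c $$ (i div H, p) * ?T p)"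
    by (rule mat_app_kron[OF basis_proj_carrier B i])
  also have "\<dots> = (\<Sum>p<2. if p = c then (if i div H = c then ?T p else 0) else 0)"
    using id by (intro sum.cong refl) (simp add: basis_proj_index)
  finally show ?thesis using c B by (simp add: sum.delta mat_app_def)
qed

lemma mat_app_ctrl_mat:
  assumes Y: "Y \<in> carrier_mat H H" and i: "i < 2 * H"
  shows "mat_app (ctrl_mat H Y) v i = (if i < H then v i else mat_app Y (\<lambda>r. v (H + r)) (i - H))"
proof -
  have "mat_app (ctrl_mat H Y) v i
      = mat_app (kron (basis_proj 2 0) (1\<^sub>m H)) v i + mat_app (kron (basis_proj 2 1) Y) v i"
    unfolding ctrl_mat_def using i Y
    by (intro mat_app_add_mat) (auto simp: kron_def basis_proj_def)
  also have "\<dots> = (if i div H = 0 then mat_app (1\<^sub>m H) (\<lambda>r. v r) (i mod H) else 0)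
      + (if i div H = 1 then mat_app Y (\<lambda>r. v (H + r)) (i mod H) else 0)"
    using mat_app_kron_basis_proj[of 0 "1\<^sub>m H" H i v] mat_app_kron_basis_proj[of 1 Y H i v] Y i
    by simp
  also have "\<dots> = (if i < H then v i else mat_app Y (\<lambda>r. v (H + r)) (i - H))"
  proof (cases "i < H")
    case True
    then show ?thesis by (simp add: mat_app_one)
  next
    case False
    have split: "i = 1 * H + (i - H)" "i - H < H" using False i by auto
    have "i div H = 1" "i mod H = i - H"
      using block_div_mod[OF split(2), of 1] by (simp_all only: split(1)[symmetric])
    then show ?thesis using False by simp
  qed
  finally show ?thesis .
qed

lemma ctrl_mat_op_dist_le:
  assumes Y: "Y \<in> carrier_mat H H" and Y': "Y' \<in> carrier_mat H H" and YY': "op_dist_le H Y Y' \<delta>"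
  shows "op_dist_le (2 * H) (ctrl_mat H Y) (ctrl_mat H Y') \<delta>"
  unfolding op_dist_le_def
proof
  fix v :: "nat \<Rightarrow> complex"
  let ?d = "\<lambda>i. mat_app (ctrl_mat H Y) v i - mat_app (ctrl_mat H Y') v i"
  have "vnorm_sq (2 * H) ?d
      = vnorm_sq H (\<lambda>r. mat_app Y (\<lambda>r. v (H + r)) r - mat_app Y' (\<lambda>r. v (H + r)) r)"
    unfolding vnorm_sq_halves
    by (simp add: vnorm_sq_def mat_app_ctrl_mat[OF Y] mat_app_ctrl_mat[OF Y'])
  also have "\<dots> \<le> \<delta>\<^sup>2 * vnorm_sq H (\<lambda>r. v (H + r))"
    using YY' unfolding op_dist_le_def by blast
  also have "\<dots> \<le> \<delta>\<^sup>2 * vnorm_sq (2 * H) v"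
    unfolding vnorm_sq_halves by (simp add: mult_left_mono vnorm_sq_nonneg)
  finally show "vnorm_sq (2 * H) ?d \<le> \<delta>\<^sup>2 * vnorm_sq (2 * H) v" .
qed

lemma ctrl_mat_contraction:
  assumes Y: "Y \<in> carrier_mat H H" and "contraction H Y"
  shows "contraction (2 * H) (ctrl_mat H Y)"
  unfolding contraction_def
proof
  fix v :: "nat \<Rightarrow> complex"
  have "vnorm_sq (2 * H) (mat_app (ctrl_mat H Y) v)
      = vnorm_sq H v + vnorm_sq H (mat_app Y (\<lambda>r. v (H + r)))"
    unfolding vnorm_sq_halves
    by (intro arg_cong2[where f="(+)"] vnorm_sq_cong) (simp_all add: mat_app_ctrl_mat[OF Y])
  also have "\<dots> \<le> vnorm_sq H v + vnorm_sq H (\<lambda>r. v (H + r))"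
    using assms(2) unfolding contraction_def by simp
  finally show "vnorm_sq (2 * H) (mat_app (ctrl_mat H Y) v) \<le> vnorm_sq (2 * H) v"
    unfolding vnorm_sq_halves .
qed

section \<open>Queries and the hybrid argument\<close>

definition oracle_use :: "qkind \<Rightarrow> complex mat \<Rightarrow> complex mat" where
  "oracle_use q W = (if q = QInv \<or> q = QCtrlInv then adj W else W)"

lemma embed_eq_oracle_use:
  "embed m k q W = (if q = QPlain \<or> q = QInv then kron (oracle_use q W) (1\<^sub>m (2^(m-k)))
     else ctrl_mat (2^(m-1)) (kron (oracle_use q W) (1\<^sub>m (2^(m-1-k)))))"
  by (cases q) (simp_all add: embed_def oracle_use_def ctrl_mat_def)

lemma oracle_use_carrier: "W \<in> carrier_mat d d \<Longrightarrow> oracle_use q W \<in> carrier_mat d d"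
  by (simp add: oracle_use_def adj_carrier)

lemma oracle_use_contraction: "is_unitary d W \<Longrightarrow> contraction d (oracle_use q W)"
  by (simp add: oracle_use_def unitary_contraction)

lemma oracle_use_op_dist_le:
  "op_dist_le d W W' \<delta> \<Longrightarrow> op_dist_le d (adj W) (adj W') \<delta>
    \<Longrightarrow> op_dist_le d (oracle_use q W) (oracle_use q W') \<delta>"
  by (simp add: oracle_use_def)

lemma power2_split:
  assumes "k + 1 \<le> m"
  shows "(2::nat)^k * 2^(m-k) = 2^m" "2 * (2::nat)^(m-1) = 2^m" "(2::nat)^k * 2^(m-1-k) = 2^(m-1)"
  using assms by (simp_all add: power_add[symmetric]) (cases m; simp)

lemma embed_carrier:
  assumes km: "k + 1 \<le> m" and W: "W \<in> carrier_mat (2^k) (2^k)"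
  shows "embed m k q W \<in> carrier_mat (2^m) (2^m)"
proof -
  have V: "oracle_use q W \<in> carrier_mat (2^k) (2^k)" using W by (rule oracle_use_carrier)
  show ?thesis
    using kron_carrier[OF V one_carrier_mat, of "2^(m-k)"]
      ctrl_mat_carrier[OF kron_carrier[OF V one_carrier_mat, of "2^(m-1-k)"]]
    by (cases "q = QPlain \<or> q = QInv")
      (simp_all only: embed_eq_oracle_use power2_split[OF km] if_True if_False)
qed

lemma embed_contraction:
  assumes km: "k + 1 \<le> m" and W: "is_unitary (2^k) W"
  shows "contraction (2^m) (embed m k q W)"
proof -
  have V: "oracle_use q W \<in> carrier_mat (2^k) (2^k)"
    using W by (intro oracle_use_carrier) (simp add: is_unitary_def)
  have cV: "contraction (2^k) (oracle_use q W)" using W by (rule oracle_use_contraction)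
  show ?thesis
    using kron_one_contraction[OF V cV, of "2^(m-k)"]
      ctrl_mat_contraction[OF kron_carrier[OF V one_carrier_mat] kron_one_contraction[OF V cV],
        of "2^(m-1-k)"]
    by (cases "q = QPlain \<or> q = QInv")
      (simp_all only: embed_eq_oracle_use power2_split[OF km] if_True if_False)
qed

lemma embed_op_dist_le:
  assumes km: "k + 1 \<le> m"
    and W: "W \<in> carrier_mat (2^k) (2^k)" and W': "W' \<in> carrier_mat (2^k) (2^k)"
    and d: "op_dist_le (2^k) W W' \<delta>" and da: "op_dist_le (2^k) (adj W) (adj W') \<delta>"
  shows "op_dist_le (2^m) (embed m k q W) (embed m k q W') \<delta>"
proof -
  have V: "oracle_use q W \<in> carrier_mat (2^k) (2^k)" using W by (rule oracle_use_carrier)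
  have V': "oracle_use q W' \<in> carrier_mat (2^k) (2^k)" using W' by (rule oracle_use_carrier)
  have dV: "op_dist_le (2^k) (oracle_use q W) (oracle_use q W') \<delta>"
    using d da by (rule oracle_use_op_dist_le)
  show ?thesis
    using kron_one_op_dist_le[OF V V' dV, of "2^(m-k)"]
      ctrl_mat_op_dist_le[OF kron_carrier[OF V one_carrier_mat] kron_carrier[OF V' one_carrier_mat]
        kron_one_op_dist_le[OF V V' dV], of "2^(m-1-k)"]
    by (cases "q = QPlain \<or> q = QInv")
      (simp_all only: embed_eq_oracle_use power2_split[OF km] if_True if_False)
qed

lemma query_op_carrier:
  assumes ws: "n + max a1 a2 + 1 \<le> ws A"
    and Or: "Or \<in> carrier_mat (2^(n+a1)) (2^(n+a1))"
    and Os: "Os \<in> carrier_mat (2^(n+a2)) (2^(n+a2))"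
  shows "query_op A n a1 a2 Or Os t \<in> carrier_mat (2^ws A) (2^ws A)"
proof -
  obtain b q where "qry A t = (b, q)" by fastforce
  then show ?thesis using ws embed_carrier[OF _ Or] embed_carrier[OF _ Os]
    by (cases b) (simp_all add: query_op_def)
qed

lemma query_op_contraction:
  assumes ws: "n + max a1 a2 + 1 \<le> ws A"
    and Or: "is_unitary (2^(n+a1)) Or" and Os: "is_unitary (2^(n+a2)) Os"
  shows "contraction (2^ws A) (query_op A n a1 a2 Or Os t)"
proof -
  obtain b q where "qry A t = (b, q)" by fastforce
  then show ?thesis using ws embed_contraction[OF _ Or] embed_contraction[OF _ Os]
    by (cases b) (simp_all add: query_op_def)
qed

lemma query_op_op_dist_le:
  assumes ws: "n + max a1 a2 + 1 \<le> ws A"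
    and Os: "Os \<in> carrier_mat (2^(n+a2)) (2^(n+a2))"
    and Os': "Os' \<in> carrier_mat (2^(n+a2)) (2^(n+a2))"
    and d: "op_dist_le (2^(n+a2)) Os Os' \<delta>" and da: "op_dist_le (2^(n+a2)) (adj Os) (adj Os') \<delta>"
  shows "op_dist_le (2^ws A) (query_op A n a1 a2 Or Os t) (query_op A n a1 a2 Or Os' t) \<delta>"
proof -
  obtain b q where "qry A t = (b, q)" by fastforce
  then show ?thesis using ws embed_op_dist_le[OF _ Os Os' d da]
    by (cases b) (simp_all add: query_op_def op_dist_le_refl)
qed

lemma run_op_contraction:
  assumes V: "valid_alg n a1 a2 A"
    and Or: "is_unitary (2^(n+a1)) Or" and Os: "is_unitary (2^(n+a2)) Os"
  shows "t \<le> nq A \<Longrightarrow> run_op A n a1 a2 Or Os t \<in> carrier_mat (2^ws A) (2^ws A)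
    \<and> contraction (2^ws A) (run_op A n a1 a2 Or Os t)"
proof (induction t)
  case 0
  then show ?case using V by (simp add: valid_alg_def is_unitary_def unitary_contraction)
next
  case (Suc t)
  have ws: "n + max a1 a2 + 1 \<le> ws A" using V by (simp add: valid_alg_def)
  have U: "U A (Suc t) \<in> carrier_mat (2^ws A) (2^ws A)" "contraction (2^ws A) (U A (Suc t))"
    using V Suc.prems by (auto simp: valid_alg_def is_unitary_def unitary_contraction)
  have Q: "query_op A n a1 a2 Or Os t \<in> carrier_mat (2^ws A) (2^ws A)"
    using Or Os by (intro query_op_carrier[OF ws]) (auto simp: is_unitary_def)
  have cQ: "contraction (2^ws A) (query_op A n a1 a2 Or Os t)"
    by (rule query_op_contraction[OF ws Or Os])
  from Suc have R: "run_op A n a1 a2 Or Os t \<in> carrier_mat (2^ws A) (2^ws A)"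
    "contraction (2^ws A) (run_op A n a1 a2 Or Os t)" by auto
  show ?case
    using U Q cQ R by (auto intro!: contraction_mult)
qed

lemma run_op_state_vnorm_le_1:
  assumes "valid_alg n a1 a2 A" "is_unitary (2^(n+a1)) Or" "is_unitary (2^(n+a2)) Os" "t \<le> nq A"
  shows "vnorm (2^ws A) (mat_app (run_op A n a1 a2 Or Os t) basis0) \<le> 1"
proof -
  have "vnorm (2^ws A) (mat_app (run_op A n a1 a2 Or Os t) basis0) \<le> vnorm (2^ws A) basis0"
    using run_op_contraction[OF assms] by (simp add: contraction_vnorm)
  also have "\<dots> = 1" by (simp add: vnorm_def vnorm_sq_basis0)
  finally show ?thesis .
qed

text \<open>The hybrid argument: replacing the oracle \<open>Os\<close> by \<open>Os'\<close> in one query moves the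
  state by at most \<open>\<delta>\<close>, and the remaining operations are contractions.\<close>

lemma run_op_hybrid:
  assumes V: "valid_alg n a1 a2 A" and Or: "is_unitary (2^(n+a1)) Or"
    and Os: "is_unitary (2^(n+a2)) Os" and Os': "is_unitary (2^(n+a2)) Os'"
    and d: "op_dist_le (2^(n+a2)) Os Os' \<delta>" and da: "op_dist_le (2^(n+a2)) (adj Os) (adj Os') \<delta>"
    and \<delta>: "0 \<le> \<delta>"
  shows "t \<le> nq A \<Longrightarrow> vnorm (2^ws A) (\<lambda>i. mat_app (run_op A n a1 a2 Or Os t) basis0 i
      - mat_app (run_op A n a1 a2 Or Os' t) basis0 i) \<le> real t * \<delta>"
proof (induction t)
  case 0
  then show ?case by (simp add: vnorm_def vnorm_sq_def)
next
  case (Suc t)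
  let ?N = "2^ws A :: nat"
  let ?Q = "query_op A n a1 a2 Or Os t" and ?Q' = "query_op A n a1 a2 Or Os' t"
  define \<psi> where "\<psi> = mat_app (run_op A n a1 a2 Or Os t) basis0"
  define \<psi>' where "\<psi>' = mat_app (run_op A n a1 a2 Or Os' t) basis0"
  have ws: "n + max a1 a2 + 1 \<le> ws A" using V by (simp add: valid_alg_def)
  have U: "U A (Suc t) \<in> carrier_mat ?N ?N" "contraction ?N (U A (Suc t))"
    using V Suc.prems by (auto simp: valid_alg_def is_unitary_def unitary_contraction)
  have Q: "?Q \<in> carrier_mat ?N ?N" "?Q' \<in> carrier_mat ?N ?N"
    using Or Os Os' by (auto intro!: query_op_carrier[OF ws] simp: is_unitary_def)
  have R: "run_op A n a1 a2 Or Os t \<in> carrier_mat ?N ?N"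
    "run_op A n a1 a2 Or Os' t \<in> carrier_mat ?N ?N"
    using run_op_contraction[OF V Or Os] run_op_contraction[OF V Or Os'] Suc.prems by auto
  have step: "mat_app (U A (Suc t) * X * Y) basis0 i
      = mat_app (U A (Suc t)) (mat_app X (mat_app Y basis0)) i"
    if "X \<in> carrier_mat ?N ?N" "Y \<in> carrier_mat ?N ?N" "i < ?N" for X Y i
  proof -
    have "mat_app (U A (Suc t) * X * Y) basis0 i = mat_app (U A (Suc t) * X) (mat_app Y basis0) i"
      using that U by (intro mat_app_mult) auto
    also have "\<dots> = mat_app (U A (Suc t)) (mat_app X (mat_app Y basis0)) i"
      using that U by (intro mat_app_mult) auto
    finally show ?thesis .
  qed
  have "vnorm ?N (\<lambda>i. mat_app (run_op A n a1 a2 Or Os (Suc t)) basis0 i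
        - mat_app (run_op A n a1 a2 Or Os' (Suc t)) basis0 i)
      = vnorm ?N (mat_app (U A (Suc t)) (\<lambda>j. mat_app ?Q \<psi> j - mat_app ?Q' \<psi>' j))"
    unfolding \<psi>_def \<psi>'_def by (intro vnorm_cong) (simp add: step Q R mat_app_diff)
  also have "\<dots> \<le> vnorm ?N (\<lambda>j. mat_app ?Q \<psi> j - mat_app ?Q' \<psi>' j)"
    by (rule contraction_vnorm[OF U(2)])
  also have "(\<lambda>j. mat_app ?Q \<psi> j - mat_app ?Q' \<psi>' j)
      = (\<lambda>j. mat_app ?Q (\<lambda>k. \<psi> k - \<psi>' k) j + (mat_app ?Q \<psi>' j - mat_app ?Q' \<psi>' j))"
    by (simp add: mat_app_diff)
  also have "vnorm ?N \<dots> \<le> vnorm ?N (mat_app ?Q (\<lambda>k. \<psi> k - \<psi>' k))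
      + vnorm ?N (\<lambda>j. mat_app ?Q \<psi>' j - mat_app ?Q' \<psi>' j)"
    by (rule vnorm_triangle)
  also have "\<dots> \<le> real t * \<delta> + \<delta> * 1"
  proof (rule add_mono)
    have "vnorm ?N (mat_app ?Q (\<lambda>k. \<psi> k - \<psi>' k)) \<le> vnorm ?N (\<lambda>k. \<psi> k - \<psi>' k)"
      by (rule contraction_vnorm[OF query_op_contraction[OF ws Or Os]])
    also have "\<dots> \<le> real t * \<delta>" using Suc unfolding \<psi>_def \<psi>'_def by simp
    finally show "vnorm ?N (mat_app ?Q (\<lambda>k. \<psi> k - \<psi>' k)) \<le> real t * \<delta>" .
    have dQ: "op_dist_le ?N ?Q ?Q' \<delta>"
      using Os Os' by (intro query_op_op_dist_le[OF ws _ _ d da]) (auto simp: is_unitary_def)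
    have "vnorm ?N (\<lambda>j. mat_app ?Q \<psi>' j - mat_app ?Q' \<psi>' j) \<le> \<delta> * vnorm ?N \<psi>'"
      by (rule op_dist_le_vnorm[OF dQ \<delta>])
    also have "\<dots> \<le> \<delta> * 1"
      using run_op_state_vnorm_le_1[OF V Or Os', of t] Suc.prems \<delta> unfolding \<psi>'_def
      by (intro mult_left_mono) auto
    finally show "vnorm ?N (\<lambda>j. mat_app ?Q \<psi>' j - mat_app ?Q' \<psi>' j) \<le> \<delta> * 1" .
  qed
  finally show ?case by (simp add: algebra_simps)
qed

lemma sum_cmod_sq_diff_le:
  assumes S: "S \<subseteq> {..<N}"
  shows "(\<Sum>x\<in>S. (cmod (a x))\<^sup>2) - (\<Sum>x\<in>S. (cmod (b x))\<^sup>2)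
    \<le> vnorm N (\<lambda>i. a i - b i) * (vnorm N a + vnorm N b)"
proof -
  have "(\<Sum>x\<in>S. (cmod (a x))\<^sup>2) - (\<Sum>x\<in>S. (cmod (b x))\<^sup>2)
      = (\<Sum>x\<in>S. (cmod (a x) - cmod (b x)) * (cmod (a x) + cmod (b x)))"
    by (simp add: sum_subtractf[symmetric] power2_eq_square algebra_simps)
  also have "\<dots> \<le> (\<Sum>x\<in>S. cmod (a x - b x) * (cmod (a x) + cmod (b x)))"
    by (intro sum_mono mult_right_mono) (auto intro: norm_triangle_ineq2)
  also have "\<dots> \<le> (\<Sum>x<N. cmod (a x - b x) * (cmod (a x) + cmod (b x)))"
    by (rule sum_mono2) (auto simp: S)
  also have "\<dots> = (\<Sum>x<N. \<bar>cmod (a x - b x)\<bar> * \<bar>cmod (a x) + cmod (b x)\<bar>)" by simp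
  also have "\<dots> \<le> L2_set (\<lambda>x. cmod (a x - b x)) {..<N} * L2_set (\<lambda>x. cmod (a x) + cmod (b x)) {..<N}"
    by (rule L2_set_mult_ineq)
  also have "\<dots> \<le> vnorm N (\<lambda>i. a i - b i) * (vnorm N a + vnorm N b)"
    unfolding vnorm_eq_L2_set by (intro mult_left_mono L2_set_triangle_ineq L2_set_nonneg)
  finally show ?thesis .
qed

text \<open>Two unit-bounded states whose measurement lands with probability \<open>2/3\<close> in disjoint
  sets of outcomes are \<open>1/6\<close> apart: the second puts mass at most \<open>1/3\<close> on the first set.\<close>

lemma success_on_disjoint_sets_imp_far:
  assumes a: "vnorm N a \<le> 1" and b: "vnorm N b \<le> 1"
    and G: "G1 \<subseteq> {..<N}" "G2 \<subseteq> {..<N}" "G1 \<inter> G2 = {}"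
    and p1: "2/3 \<le> (\<Sum>x\<in>G1. (cmod (a x))\<^sup>2)" and p2: "2/3 \<le> (\<Sum>x\<in>G2. (cmod (b x))\<^sup>2)"
  shows "1/6 \<le> vnorm N (\<lambda>i. a i - b i)"
proof -
  have f: "finite G1" "finite G2" using G finite_subset by blast+
  have "(\<Sum>x\<in>G1. (cmod (b x))\<^sup>2) + (\<Sum>x\<in>G2. (cmod (b x))\<^sup>2) = (\<Sum>x\<in>G1 \<union> G2. (cmod (b x))\<^sup>2)"
    using f G by (simp add: sum.union_disjoint)
  also have "\<dots> \<le> vnorm_sq N b" unfolding vnorm_sq_def by (rule sum_mono2) (use G in auto)
  also have "\<dots> \<le> 1" using b by (rule vnorm_le_1_imp_vnorm_sq_le_1)
  finally have "(\<Sum>x\<in>G1. (cmod (b x))\<^sup>2) \<le> 1/3" using p2 by simp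
  then have "1/3 \<le> (\<Sum>x\<in>G1. (cmod (a x))\<^sup>2) - (\<Sum>x\<in>G1. (cmod (b x))\<^sup>2)" using p1 by simp
  also have "\<dots> \<le> vnorm N (\<lambda>i. a i - b i) * (vnorm N a + vnorm N b)"
    by (rule sum_cmod_sq_diff_le[OF G(1)])
  also have "\<dots> \<le> vnorm N (\<lambda>i. a i - b i) * 2"
    using a b vnorm_nonneg by (intro mult_left_mono) auto
  finally show ?thesis by simp
qed

lemma success_prob_eq_final_state:
  assumes "valid_alg n a1 a2 A" "is_unitary (2^(n+a1)) Or" "is_unitary (2^(n+a2)) Os"
  shows "success_prob A n a1 a2 Or Os f \<epsilon> = (\<Sum>x \<in> {x. x < 2^(ws A) \<and> \<bar>out A x - f\<bar> \<le> \<epsilon>}.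
    (cmod (mat_app (run_op A n a1 a2 Or Os (nq A)) basis0 x))\<^sup>2)"
proof -
  have "run_op A n a1 a2 Or Os (nq A) \<in> carrier_mat (2^ws A) (2^ws A)"
    using run_op_contraction[OF assms order_refl] ..
  then have "mat_app (run_op A n a1 a2 Or Os (nq A)) basis0 x
      = run_op A n a1 a2 Or Os (nq A) $$ (x, 0)" for x
    by (intro mat_app_basis0) auto
  then show ?thesis unfolding success_prob_def by (simp only:)
qed

lemma query_lower_bound:
  assumes V: "valid_alg n a1 a2 A" and Or: "is_unitary (2^(n+a1)) Or"
    and Os: "is_unitary (2^(n+a2)) Os" and Os': "is_unitary (2^(n+a2)) Os'"
    and d: "op_dist_le (2^(n+a2)) Os Os' \<delta>" and da: "op_dist_le (2^(n+a2)) (adj Os) (adj Os') \<delta>"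
    and \<delta>: "0 \<le> \<delta>"
    and s: "2/3 \<le> success_prob A n a1 a2 Or Os f \<epsilon>"
    and s': "2/3 \<le> success_prob A n a1 a2 Or Os' f' \<epsilon>"
    and gap: "2 * \<epsilon> < \<bar>f - f'\<bar>"
  shows "1/6 \<le> real (nq A) * \<delta>"
proof -
  let ?\<psi> = "mat_app (run_op A n a1 a2 Or Os (nq A)) basis0"
  let ?\<psi>' = "mat_app (run_op A n a1 a2 Or Os' (nq A)) basis0"
  define G where "G = {x. x < 2^(ws A) \<and> \<bar>out A x - f\<bar> \<le> \<epsilon>}"
  define G' where "G' = {x. x < 2^(ws A) \<and> \<bar>out A x - f'\<bar> \<le> \<epsilon>}"
  have norms: "vnorm (2^ws A) ?\<psi> \<le> 1" "vnorm (2^ws A) ?\<psi>' \<le> 1"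
    using run_op_state_vnorm_le_1[OF V Or Os order_refl]
      run_op_state_vnorm_le_1[OF V Or Os' order_refl] .
  have "\<bar>f - f'\<bar> \<le> 2 * \<epsilon>" if "\<bar>out A x - f\<bar> \<le> \<epsilon>" "\<bar>out A x - f'\<bar> \<le> \<epsilon>" for x
    using that by arith
  then have sets: "G \<subseteq> {..<2^ws A}" "G' \<subseteq> {..<2^ws A}" "G \<inter> G' = {}"
    using gap unfolding G_def G'_def by fastforce+
  have "2/3 \<le> (\<Sum>x\<in>G. (cmod (?\<psi> x))\<^sup>2)"
    using s unfolding success_prob_eq_final_state[OF V Or Os] G_def .
  moreover have "2/3 \<le> (\<Sum>x\<in>G'. (cmod (?\<psi>' x))\<^sup>2)"
    using s' unfolding success_prob_eq_final_state[OF V Or Os'] G'_def .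
  ultimately have "1/6 \<le> vnorm (2^ws A) (\<lambda>i. ?\<psi> i - ?\<psi>' i)"
    by (rule success_on_disjoint_sets_imp_far[OF norms sets])
  also have "\<dots> \<le> real (nq A) * \<delta>" by (rule run_op_hybrid[OF V Or Os Os' d da \<delta> order_refl])
  finally show ?thesis .
qed

section \<open>Qubit states purified by plane rotations\<close>

lemma sum_lessThan_single_support:
  fixes N :: nat
  assumes "i < N" "\<And>j. j < N \<Longrightarrow> j \<noteq> i \<Longrightarrow> f j = 0"
  shows "(\<Sum>j<N. f j) = f i"
proof -
  have "(\<Sum>j<N. f j) = (\<Sum>j\<in>{i}. f j)"
    using assms by (intro sum.mono_neutral_right) auto
  then show ?thesis by simp
qed

lemma sum_lessThan_two_support:
  fixes N :: nat
  assumes "0 < m" "m < N" "\<And>j. j < N \<Longrightarrow> j \<noteq> 0 \<Longrightarrow> j \<noteq> m \<Longrightarrow> f j = 0"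
  shows "(\<Sum>j<N. f j) = f 0 + f m"
proof -
  have "(\<Sum>j<N. f j) = (\<Sum>j\<in>{0,m}. f j)"
    using assms by (intro sum.mono_neutral_right) auto
  then show ?thesis using assms by simp
qed

definition givens_mat :: "nat \<Rightarrow> nat \<Rightarrow> real \<Rightarrow> real \<Rightarrow> complex mat" where
  "givens_mat N m c s = mat N N (\<lambda>(i,j).
     if i = j then (if i = 0 \<or> i = m then complex_of_real c else 1)
     else if i = m \<and> j = 0 then complex_of_real s
     else if i = 0 \<and> j = m then - complex_of_real s else 0)"

lemma givens_mat_carrier: "givens_mat N m c s \<in> carrier_mat N N"
  unfolding givens_mat_def by simp

lemma givens_mat_index:
  "i < N \<Longrightarrow> j < N \<Longrightarrow> givens_mat N m c s $$ (i,j) =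
     (if i = j then (if i = 0 \<or> i = m then complex_of_real c else 1)
      else if i = m \<and> j = 0 then complex_of_real s
      else if i = 0 \<and> j = m then - complex_of_real s else 0)"
  unfolding givens_mat_def by simp

lemma mat_app_givens_mat:
  assumes m: "0 < m" "m < N" and i: "i < N"
  shows "mat_app (givens_mat N m c s) u i =
    (if i = 0 then c * u 0 - s * u m else if i = m then s * u 0 + c * u m else u i)"
proof -
  have dc: "dim_col (givens_mat N m c s) = N" by (simp add: givens_mat_def)
  show ?thesis
  proof (cases "i = 0 \<or> i = m")
    case True
    have "mat_app (givens_mat N m c s) u i
        = givens_mat N m c s $$ (i,0) * u 0 + givens_mat N m c s $$ (i,m) * u m"
      unfolding mat_app_def dc using m i True
      by (intro sum_lessThan_two_support) (auto simp: givens_mat_index)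
    then show ?thesis using m i True by (auto simp: givens_mat_index)
  next
    case False
    have "mat_app (givens_mat N m c s) u i = givens_mat N m c s $$ (i,i) * u i"
      unfolding mat_app_def dc using m i False
      by (intro sum_lessThan_single_support) (auto simp: givens_mat_index)
    then show ?thesis using m i False by (auto simp: givens_mat_index)
  qed
qed

lemma adj_givens_mat: "adj (givens_mat N m c s) = givens_mat N m c (-s)"
  unfolding adj_def by (intro eq_matI) (auto simp: givens_mat_def)

lemma givens_mat_neg_mult:
  assumes m: "0 < m" "m < N" and cs: "c\<^sup>2 + s\<^sup>2 = 1"
  shows "givens_mat N m c (-s) * givens_mat N m c s = 1\<^sub>m N"
proof (rule eq_matI)
  have cs': "complex_of_real c * complex_of_real c + complex_of_real s * complex_of_real s = 1"
    by (metis cs of_real_add of_real_mult of_real_1 power2_eq_square)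
  fix i j assume "i < dim_row (1\<^sub>m N)" "j < dim_col (1\<^sub>m N)"
  then have i: "i < N" and j: "j < N" by auto
  have "(givens_mat N m c (-s) * givens_mat N m c s) $$ (i,j)
      = mat_app (givens_mat N m c (-s)) (\<lambda>k. givens_mat N m c s $$ (k,j)) i"
    using i j by (intro index_mult_mat_app) (auto simp: givens_mat_def)
  also have "\<dots> = 1\<^sub>m N $$ (i,j)"
    using i j m cs' by (auto simp: mat_app_givens_mat givens_mat_index algebra_simps)
  finally show "(givens_mat N m c (-s) * givens_mat N m c s) $$ (i,j) = 1\<^sub>m N $$ (i,j)" .
qed (auto simp: givens_mat_def)

lemma givens_mat_unitary:
  assumes m: "0 < m" "m < N" and cs: "c\<^sup>2 + s\<^sup>2 = 1"
  shows "is_unitary N (givens_mat N m c s)"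
  using givens_mat_neg_mult[OF m cs] givens_mat_neg_mult[OF m, of c "-s"] cs
  unfolding is_unitary_def adj_givens_mat by (simp add: givens_mat_carrier)

lemma cmod_rotation_sq_sum:
  fixes \<alpha> \<beta> :: real and x y :: complex
  shows "(cmod (\<alpha> * x - \<beta> * y))\<^sup>2 + (cmod (\<beta> * x + \<alpha> * y))\<^sup>2
    = (\<alpha>\<^sup>2 + \<beta>\<^sup>2) * ((cmod x)\<^sup>2 + (cmod y)\<^sup>2)"
  unfolding cmod_power2 by (simp add: power2_eq_square algebra_simps)

lemma givens_mat_op_dist_le:
  assumes m: "0 < m" "m < N" and \<delta>: "(c - c')\<^sup>2 + (s - s')\<^sup>2 \<le> \<delta>\<^sup>2"
  shows "op_dist_le N (givens_mat N m c s) (givens_mat N m c' s') \<delta>"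
  unfolding op_dist_le_def
proof
  fix u :: "nat \<Rightarrow> complex"
  let ?a = "c - c'" and ?b = "s - s'"
  let ?d = "\<lambda>i. mat_app (givens_mat N m c s) u i - mat_app (givens_mat N m c' s') u i"
  have "vnorm_sq N ?d = (cmod (?a * u 0 - ?b * u m))\<^sup>2 + (cmod (?b * u 0 + ?a * u m))\<^sup>2"
  proof -
    have "vnorm_sq N ?d = (cmod (?d 0))\<^sup>2 + (cmod (?d m))\<^sup>2"
      unfolding vnorm_sq_def using m
      by (intro sum_lessThan_two_support) (auto simp: mat_app_givens_mat)
    also have "\<dots> = (cmod (?a * u 0 - ?b * u m))\<^sup>2 + (cmod (?b * u 0 + ?a * u m))\<^sup>2"
      using m by (simp add: mat_app_givens_mat algebra_simps)
    finally show ?thesis .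
  qed
  also have "\<dots> = (?a\<^sup>2 + ?b\<^sup>2) * ((cmod (u 0))\<^sup>2 + (cmod (u m))\<^sup>2)"
    by (rule cmod_rotation_sq_sum)
  also have "(cmod (u 0))\<^sup>2 + (cmod (u m))\<^sup>2 \<le> vnorm_sq N u"
  proof -
    have "(cmod (u 0))\<^sup>2 + (cmod (u m))\<^sup>2 = (\<Sum>i\<in>{0,m}. (cmod (u i))\<^sup>2)" using m by simp
    also have "\<dots> \<le> vnorm_sq N u" unfolding vnorm_sq_def using m by (intro sum_mono2) auto
    finally show ?thesis .
  qed
  then have "(?a\<^sup>2 + ?b\<^sup>2) * ((cmod (u 0))\<^sup>2 + (cmod (u m))\<^sup>2) \<le> \<delta>\<^sup>2 * vnorm_sq N u"
    using \<delta> vnorm_sq_nonneg[of N u] by (intro mult_mono) auto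
  finally show "vnorm_sq N ?d \<le> \<delta>\<^sup>2 * vnorm_sq N u" .
qed

lemma index_outer_basis0:
  assumes W: "W \<in> carrier_mat N N" and N: "0 < N" and i: "i < N" and j: "j < N"
  shows "(W * basis_proj N 0 * adj W) $$ (i,j) = W $$ (i,0) * cnj (W $$ (j,0))"
proof -
  have WP: "W * basis_proj N 0 \<in> carrier_mat N N" using W basis_proj_carrier by auto
  have e1: "(W * basis_proj N 0) $$ (i,l) = (if l = 0 then W $$ (i,0) else 0)" if l: "l < N" for l
  proof -
    have "(W * basis_proj N 0) $$ (i,l) = mat_app W (\<lambda>k. basis_proj N 0 $$ (k,l)) i"
      using W i l by (intro index_mult_mat_app) (auto simp: basis_proj_def)
    also have "\<dots> = W $$ (i,0) * basis_proj N 0 $$ (0,l)"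
      unfolding mat_app_def using W N l
      by (subst sum_lessThan_single_support[of 0]) (auto simp: basis_proj_index)
    also have "\<dots> = (if l = 0 then W $$ (i,0) else 0)" using N l by (simp add: basis_proj_index)
    finally show ?thesis .
  qed
  have "(W * basis_proj N 0 * adj W) $$ (i,j)
      = mat_app (W * basis_proj N 0) (\<lambda>l. adj W $$ (l,j)) i"
    using W i j WP by (intro index_mult_mat_app) (auto simp: adj_def)
  also have "\<dots> = (W * basis_proj N 0) $$ (i,0) * adj W $$ (0,j)"
    unfolding mat_app_def using WP N by (subst sum_lessThan_single_support[of 0]) (auto simp: e1)
  also have "\<dots> = W $$ (i,0) * cnj (W $$ (j,0))" using W N j by (simp add: e1 adj_def)
  finally show ?thesis .
qed

definition diag2 :: "real \<Rightarrow> real \<Rightarrow> complex mat" where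
  "diag2 x y = mat 2 2 (\<lambda>(i,j).
     if i = j then (if i = 0 then complex_of_real x else complex_of_real y) else 0)"

lemma diag2_carrier: "diag2 x y \<in> carrier_mat 2 2"
  unfolding diag2_def by simp

lemma diag2_index:
  "i < 2 \<Longrightarrow> j < 2 \<Longrightarrow>
    diag2 x y $$ (i,j) = (if i = j then (if i = 0 then complex_of_real x else complex_of_real y) else 0)"
  unfolding diag2_def by simp

lemma index_ptrace2_outer_basis0:
  assumes W: "W \<in> carrier_mat (dS * dA) (dS * dA)" and i: "i < dS" and j: "j < dS"
  shows "ptrace2 dS dA (W * basis_proj (dS * dA) 0 * adj W) $$ (i,j)
    = (\<Sum>k<dA. W $$ (i * dA + k, 0) * cnj (W $$ (j * dA + k, 0)))"
  unfolding ptrace2_def using i j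
  by (auto intro!: sum.cong index_outer_basis0[OF W] block_index_less)

text \<open>The first column \<open>c |0\<rangle>|0\<rangle> + s |1\<rangle>|1\<rangle>\<close> of the rotation in the plane of the
  coordinates \<open>0\<close> and \<open>2^a + 1\<close> purifies \<open>diag(c\<^sup>2, s\<^sup>2)\<close>; entangling with the
  ancilla is what makes the reduced state diagonal.\<close>

lemma givens_mat_prepares:
  assumes a: "1 \<le> a" and cs: "c\<^sup>2 + s\<^sup>2 = 1"
  shows "prepares 1 a (givens_mat (2^(1+a)) (2^a+1) c s) (diag2 (c\<^sup>2) (s\<^sup>2))"
proof -
  let ?R = "(2::nat)^a" let ?W = "givens_mat (2 * ?R) (?R + 1) c s"
  have R2: "2 \<le> ?R" using a by (metis one_le_numeral power_increasing power_one_right)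
  have m: "0 < ?R + 1" "?R + 1 < 2 * ?R" using R2 by auto
  have "ptrace2 2 ?R (?W * basis_proj (2 * ?R) 0 * adj ?W) = diag2 (c\<^sup>2) (s\<^sup>2)"
  proof (rule eq_matI)
    fix i j assume "i < dim_row (diag2 (c\<^sup>2) (s\<^sup>2))" "j < dim_col (diag2 (c\<^sup>2) (s\<^sup>2))"
    then have i: "i < 2" and j: "j < 2" by (auto simp: diag2_def)
    have "ptrace2 2 ?R (?W * basis_proj (2 * ?R) 0 * adj ?W) $$ (i,j)
        = (\<Sum>k<?R. ?W $$ (i * ?R + k, 0) * cnj (?W $$ (j * ?R + k, 0)))"
      by (rule index_ptrace2_outer_basis0[OF givens_mat_carrier i j])
    also have "\<dots> = diag2 (c\<^sup>2) (s\<^sup>2) $$ (i,j)"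
    proof -
      consider "i = 0 \<and> j = 1 \<or> i = 1 \<and> j = 0" | "i = 0" "j = 0" | "i = 1" "j = 1"
        using i j by linarith
      then show ?thesis
      proof cases
        case 1
        then show ?thesis using R2 by (subst sum.neutral) (auto simp: givens_mat_index diag2_index)
      next
        case 2
        then show ?thesis using R2
          by (subst sum_lessThan_single_support[of 0])
            (auto simp: givens_mat_index diag2_index power2_eq_square)
      next
        case 3
        then show ?thesis using R2
          by (subst sum_lessThan_single_support[of 1])
            (auto simp: givens_mat_index diag2_index power2_eq_square)
      qed
    qed
    finally show "ptrace2 2 ?R (?W * basis_proj (2 * ?R) 0 * adj ?W) $$ (i,j)
        = diag2 (c\<^sup>2) (s\<^sup>2) $$ (i,j)" .
  qed (auto simp: ptrace2_def diag2_def)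
  then show ?thesis unfolding prepares_def using givens_mat_unitary[OF m cs] by simp
qed

lemma quadratic_form_2:
  "(\<Sum>i<2. \<Sum>j<2. cnj (v i) * B $$ (i,j) * v j) =
    cnj (v 0) * B$$(0,0) * v 0 + cnj (v 0) * B$$(0,1) * v 1
    + cnj (v 1) * B$$(1,0) * v 0 + cnj (v 1) * B$$(1,1) * v 1"
  by (simp add: sum_lessThan_2)

lemma index_mult_mat_2:
  assumes "A \<in> carrier_mat 2 2" "B \<in> carrier_mat 2 2" "i < 2" "j < 2"
  shows "(A*B)$$(i,j) = A$$(i,0)*B$$(0,j) + A$$(i,1)*B$$(1,j)"
  using assms by (simp add: scalar_prod_def atLeast0LessThan sum_lessThan_2)

lemma Re_cnj_mult_real_mult: "Re (cnj z * complex_of_real x * z) = x * (cmod z)\<^sup>2"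
  unfolding cmod_power2 by (simp add: power2_eq_square algebra_simps)

lemma psd_diag2: assumes "0 \<le> x" "0 \<le> y" shows "psd 2 (diag2 x y)"
  unfolding psd_def
proof (intro conjI allI)
  show "diag2 x y \<in> carrier_mat 2 2" by (rule diag2_carrier)
  show "adj (diag2 x y) = diag2 x y" unfolding adj_def diag2_def by (intro eq_matI) auto
  fix v :: "nat \<Rightarrow> complex"
  have "(\<Sum>i<2. \<Sum>j<2. cnj (v i) * diag2 x y $$ (i,j) * v j)
      = cnj (v 0) * complex_of_real x * v 0 + cnj (v 1) * complex_of_real y * v 1"
    unfolding quadratic_form_2 by (simp add: diag2_index)
  then have "Re (\<Sum>i<2. \<Sum>j<2. cnj (v i) * diag2 x y $$ (i,j) * v j)
      = x * (cmod (v 0))\<^sup>2 + y * (cmod (v 1))\<^sup>2"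
    by (simp only: plus_complex.sel Re_cnj_mult_real_mult)
  then show "0 \<le> Re (\<Sum>i<2. \<Sum>j<2. cnj (v i) * diag2 x y $$ (i,j) * v j)"
    using assms by (metis add_nonneg_nonneg mult_nonneg_nonneg zero_le_power2)
qed

lemma mtrace_diag2: "mtrace (diag2 x y) = complex_of_real (x + y)"
  unfolding mtrace_def by (simp add: diag2_def sum_lessThan_2)

lemma density_diag2: "0 \<le> x \<Longrightarrow> 0 \<le> y \<Longrightarrow> x + y = 1 \<Longrightarrow> density 2 (diag2 x y)"
  unfolding density_def by (simp add: psd_diag2 mtrace_diag2)

lemma loewner_diag2:
  assumes "0 < k" "1/k \<le> x" "1/k \<le> y"
  shows "loewner_ge 2 (diag2 x y) ((1 / complex_of_real k) \<cdot>\<^sub>m 1\<^sub>m 2)"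
proof -
  have e: "diag2 x y - (1 / complex_of_real k) \<cdot>\<^sub>m 1\<^sub>m 2 = diag2 (x - 1/k) (y - 1/k)"
    by (intro eq_matI) (auto simp: diag2_def)
  show ?thesis unfolding loewner_ge_def e using assms
    by (auto simp: diag2_carrier intro!: psd_diag2)
qed

lemma diag2_mult: "diag2 a b * diag2 c d = diag2 (a*c) (b*d)"
proof (rule eq_matI)
  fix i j assume "i < dim_row (diag2 (a*c) (b*d))" "j < dim_col (diag2 (a*c) (b*d))"
  then have i: "i < 2" and j: "j < 2" by (auto simp: diag2_def)
  then consider "i = 0" "j = 0" | "i = 0" "j = 1" | "i = 1" "j = 0" | "i = 1" "j = 1" by linarith
  then show "(diag2 a b * diag2 c d) $$ (i,j) = diag2 (a*c) (b*d) $$ (i,j)"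
    unfolding index_mult_mat_2[OF diag2_carrier diag2_carrier i j]
    by cases (simp_all add: diag2_index)
qed (auto simp: diag2_def)

lemma psd2_entries:
  assumes "psd 2 B"
  shows "B $$ (1,0) = cnj (B $$ (0,1))"
    and "B $$ (0,0) = complex_of_real (Re (B $$ (0,0)))" "0 \<le> Re (B $$ (0,0))"
    and "B $$ (1,1) = complex_of_real (Re (B $$ (1,1)))" "0 \<le> Re (B $$ (1,1))"
proof -
  have Bc: "B \<in> carrier_mat 2 2" and H: "adj B = B"
    and F: "\<And>v. 0 \<le> Re (\<Sum>i<2. \<Sum>j<2. cnj (v i) * B $$ (i,j) * v j)"
    using assms unfolding psd_def by auto
  have herm: "cnj (B $$ (j,i)) = B $$ (i,j)" if "i < 2" "j < 2" for i j
  proof -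
    have "adj B $$ (i,j) = cnj (B $$ (j,i))" using Bc that by (simp add: adj_def)
    then show ?thesis using H by simp
  qed
  show "B $$ (1,0) = cnj (B $$ (0,1))" using herm[of 1 0] by simp
  show "B $$ (0,0) = complex_of_real (Re (B $$ (0,0)))" using herm[of 0 0]
    by (metis Reals_cnj_iff complex_is_Real_iff of_real_Re zero_less_numeral)
  show "B $$ (1,1) = complex_of_real (Re (B $$ (1,1)))" using herm[of 1 1]
    by (metis Reals_cnj_iff complex_is_Real_iff of_real_Re one_less_numeral_iff semiring_norm(76))
  show "0 \<le> Re (B $$ (0,0))" "0 \<le> Re (B $$ (1,1))"
    using F[of "\<lambda>k. if k = 0 then 1 else 0"] F[of "\<lambda>k. if k = 1 then 1 else 0"]
    unfolding quadratic_form_2 by simp_all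
qed

text \<open>If \<open>b = B\<^sub>0\<^sub>1 \<noteq> 0\<close>, the off-diagonal entry \<open>b (B\<^sub>0\<^sub>0 + B\<^sub>1\<^sub>1)\<close> of \<open>B\<^sup>2\<close> forces
  a zero diagonal, and then the quadratic form at \<open>(1, -b\<^sup>*)\<close> is \<open>-2|b|\<^sup>2 < 0\<close>.\<close>

lemma psd2_square_offdiag_zero:
  assumes B: "psd 2 B" and sq: "(B * B) $$ (0,1) = 0"
  shows "B $$ (0,1) = 0"
proof (rule ccontr)
  define a b d where "a = B $$ (0,0)" and "b = B $$ (0,1)" and "d = B $$ (1,1)"
  assume "B $$ (0,1) \<noteq> 0"
  then have bn: "b \<noteq> 0" by (simp add: b_def)
  have Bc: "B \<in> carrier_mat 2 2" using B by (simp add: psd_def)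
  note E = psd2_entries[OF B, folded a_def b_def d_def]
  have "b * (a + d) = 0"
    using sq index_mult_mat_2[OF Bc Bc, of 0 1] by (simp add: a_def b_def d_def algebra_simps)
  then have "Re a + Re d = 0"
    using bn by (metis mult_eq_0_iff plus_complex.sel(1) zero_complex.sel(1))
  then have az: "a = 0" "d = 0" using E by (metis add_nonneg_eq_0_iff of_real_0)+
  have F: "\<And>v. 0 \<le> Re (\<Sum>i<2. \<Sum>j<2. cnj (v i) * B $$ (i,j) * v j)"
    using B unfolding psd_def by blast
  have "0 \<le> Re (\<Sum>i<2. \<Sum>j<2. cnj (if i = 0 then 1 else - cnj b) * B $$ (i,j)
      * (if j = 0 then 1 else - cnj b))"
    by (rule F)
  also have "\<dots> = - 2 * (cmod b)\<^sup>2"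
    using az E(1) unfolding quadratic_form_2 cmod_power2
    by (simp add: a_def b_def d_def power2_eq_square algebra_simps)
  finally show False using bn by simp
qed

lemma complex_of_real_sqrt_unique:
  assumes real: "z = complex_of_real (Re z)" and nonneg: "0 \<le> Re z"
    and sq: "z * z = complex_of_real x"
  shows "z = complex_of_real (sqrt x)"
proof -
  have "Re z * Re z = x" using real sq by (metis of_real_eq_iff of_real_mult)
  then have "Re z = sqrt x" using nonneg by (metis real_sqrt_abs power2_eq_square abs_of_nonneg)
  then show ?thesis by (subst real) simp
qed

lemma psd_square_root_diag2:
  assumes B: "psd 2 B" and sq: "B * B = diag2 x y" and x: "0 \<le> x" and y: "0 \<le> y"
  shows "B = diag2 (sqrt x) (sqrt y)"
proof -
  have Bc: "B \<in> carrier_mat 2 2" using B by (simp add: psd_def)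
  note E = psd2_entries[OF B]
  have sq_index: "diag2 x y $$ (i,j) = B$$(i,0)*B$$(0,j) + B$$(i,1)*B$$(1,j)"
    if "i < 2" "j < 2" for i j
    using index_mult_mat_2[OF Bc Bc that] sq by simp
  have b0: "B $$ (0,1) = 0" "B $$ (1,0) = 0"
    using psd2_square_offdiag_zero[OF B] sq E(1) by (simp_all add: diag2_index)
  have "B $$ (0,0) = complex_of_real (sqrt x)"
    using sq_index[of 0 0] b0 E(2,3) by (intro complex_of_real_sqrt_unique) (simp_all add: diag2_index)
  moreover have "B $$ (1,1) = complex_of_real (sqrt y)"
    using sq_index[of 1 1] b0 E(4,5) by (intro complex_of_real_sqrt_unique) (simp_all add: diag2_index)
  ultimately show ?thesis
    using Bc b0 by (intro eq_matI) (auto simp: diag2_def less_2_cases_iff)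
qed

lemma msqrt_diag2:
  assumes "0 \<le> x" "0 \<le> y"
  shows "msqrt 2 (diag2 x y) = diag2 (sqrt x) (sqrt y)"
  unfolding msqrt_def
proof (rule the_equality)
  show "psd 2 (diag2 (sqrt x) (sqrt y))
      \<and> diag2 (sqrt x) (sqrt y) * diag2 (sqrt x) (sqrt y) = diag2 x y"
    using assms by (simp add: psd_diag2 diag2_mult)
  show "\<And>B. psd 2 B \<and> B * B = diag2 x y \<Longrightarrow> B = diag2 (sqrt x) (sqrt y)"
    using psd_square_root_diag2 assms by blast
qed

lemma sqrt_mult_mult_sqrt:
  assumes "0 \<le> q"
  shows "sqrt q * p * sqrt q = q * p"
proof -
  have "sqrt q * p * sqrt q = (sqrt q * sqrt q) * p" by (simp add: mult_ac)
  then show ?thesis using assms by simp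
qed

lemma fidelity_diag2:
  assumes "0 \<le> p1" "0 \<le> p2" "0 \<le> q1" "0 \<le> q2"
  shows "fidelity 2 (diag2 p1 p2) (diag2 q1 q2) = sqrt (q1 * p1) + sqrt (q2 * p2)"
proof -
  have "msqrt 2 (diag2 q1 q2) * diag2 p1 p2 * msqrt 2 (diag2 q1 q2) = diag2 (q1 * p1) (q2 * p2)"
    using assms by (simp add: msqrt_diag2 diag2_mult sqrt_mult_mult_sqrt)
  then show ?thesis unfolding fidelity_def using assms
    by (simp add: msqrt_diag2 mtrace_diag2)
qed

section \<open>The hard instances\<close>

text \<open>Angles are parametrized rationally, \<open>t = tan(\<theta>/2)\<close>, so that every identity about the
  hard instances below is a field identity.\<close>

definition rcos :: "real \<Rightarrow> real" where
  "rcos t = (1 - t\<^sup>2) / (1 + t\<^sup>2)"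

definition rsin :: "real \<Rightarrow> real" where
  "rsin t = 2 * t / (1 + t\<^sup>2)"

lemma one_plus_sq_pos: "0 < 1 + (t::real)\<^sup>2"
  by (simp add: add_pos_nonneg)

lemma rcos_rsin_sq_sum: "(rcos t)\<^sup>2 + (rsin t)\<^sup>2 = 1"
proof -
  have d: "1 + t\<^sup>2 \<noteq> 0" using one_plus_sq_pos[of t] by simp
  have e: "(1 - t\<^sup>2)\<^sup>2 + (2*t)\<^sup>2 = (1 + t\<^sup>2)\<^sup>2" by (simp add: power2_eq_square algebra_simps)
  have "(rcos t)\<^sup>2 + (rsin t)\<^sup>2 = ((1 - t\<^sup>2)\<^sup>2 + (2*t)\<^sup>2) / (1 + t\<^sup>2)\<^sup>2"
    unfolding rcos_def rsin_def power_divide add_divide_distrib by simp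
  also have "\<dots> = 1" unfolding e using d by simp
  finally show ?thesis .
qed

lemma rcos_nonneg: "0 \<le> t \<Longrightarrow> t \<le> 1 \<Longrightarrow> 0 \<le> rcos t"
  unfolding rcos_def using one_plus_sq_pos[of t] by (intro divide_nonneg_pos) (auto simp: power_le_one)

lemma rsin_nonneg: "0 \<le> t \<Longrightarrow> 0 \<le> rsin t"
  unfolding rsin_def using one_plus_sq_pos[of t] by simp

lemma rcos_sq_ge: assumes "0 \<le> t" "t \<le> 4/5" shows "1/100 \<le> (rcos t)\<^sup>2"
proof -
  have "t * t \<le> 4/5 * (4/5)" using assms by (intro mult_mono) auto
  then have "1/10 \<le> rcos t" unfolding rcos_def using one_plus_sq_pos[of t]
    by (simp add: divide_simps power2_eq_square)
  then have "(1/10)\<^sup>2 \<le> (rcos t)\<^sup>2" by (intro power_mono) auto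
  then show ?thesis by (simp add: power2_eq_square)
qed

lemma rsin_sq_ge: assumes "1/10 \<le> t" "t \<le> 1" shows "1/100 \<le> (rsin t)\<^sup>2"
proof -
  have tt: "t * t \<le> t * 1" using assms by (intro mult_left_mono) auto
  have "1/10 \<le> rsin t" unfolding rsin_def using one_plus_sq_pos[of t] assms
    by (simp add: divide_simps power2_eq_square) (use tt in linarith)
  then have "(1/10)\<^sup>2 \<le> (rsin t)\<^sup>2" by (intro power_mono) auto
  then show ?thesis by (simp add: power2_eq_square)
qed

lemma rcos_rsin_dist_sq:
  "(rcos a - rcos b)\<^sup>2 + (rsin a - rsin b)\<^sup>2 = 4 * (a - b)\<^sup>2 / ((1 + a\<^sup>2) * (1 + b\<^sup>2))"
proof -
  define Da Db where "Da = 1 + a\<^sup>2" and "Db = 1 + b\<^sup>2"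
  have d: "Da \<noteq> 0" "Db \<noteq> 0"
    using one_plus_sq_pos[of a] one_plus_sq_pos[of b] by (auto simp: Da_def Db_def)
  have c: "rcos a - rcos b = ((1 - a\<^sup>2) * Db - (1 - b\<^sup>2) * Da) / (Da * Db)"
    unfolding rcos_def Da_def[symmetric] Db_def[symmetric] using d by (simp add: diff_frac_eq)
  have s: "rsin a - rsin b = ((2*a) * Db - (2*b) * Da) / (Da * Db)"
    unfolding rsin_def Da_def[symmetric] Db_def[symmetric] using d by (simp add: diff_frac_eq)
  have poly: "((1 - a\<^sup>2) * Db - (1 - b\<^sup>2) * Da)\<^sup>2 + ((2*a) * Db - (2*b) * Da)\<^sup>2
      = (4 * (a - b)\<^sup>2) * (Da * Db)"
    unfolding Da_def Db_def by (simp add: power2_eq_square algebra_simps)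
  have "(rcos a - rcos b)\<^sup>2 + (rsin a - rsin b)\<^sup>2
      = (((1 - a\<^sup>2) * Db - (1 - b\<^sup>2) * Da)\<^sup>2 + ((2*a) * Db - (2*b) * Da)\<^sup>2) / (Da * Db)\<^sup>2"
    unfolding c s power_divide add_divide_distrib by simp
  also have "\<dots> = 4 * (a - b)\<^sup>2 / (Da * Db)"
    unfolding poly using d by (simp add: power2_eq_square)
  finally show ?thesis by (simp add: Da_def Db_def)
qed

lemma rcos_rsin_dist_sq_le: "(rcos a - rcos b)\<^sup>2 + (rsin a - rsin b)\<^sup>2 \<le> (2 * (b - a))\<^sup>2"
proof -
  have D: "1 \<le> (1 + a\<^sup>2) * (1 + b\<^sup>2)" using one_plus_sq_pos[of a] one_plus_sq_pos[of b]
    using mult_mono[of 1 "1 + a\<^sup>2" 1 "1 + b\<^sup>2"] by simp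
  have "4 * (a - b)\<^sup>2 / ((1 + a\<^sup>2) * (1 + b\<^sup>2)) \<le> 4 * (a - b)\<^sup>2 / 1"
    using D by (intro divide_left_mono) auto
  also have "\<dots> = (2 * (b - a))\<^sup>2" by (simp add: power2_eq_square algebra_simps)
  finally show ?thesis by (simp add: rcos_rsin_dist_sq)
qed

definition hard_fidelity :: "real \<Rightarrow> real" where
  "hard_fidelity t = rcos (1/10) * rcos t + rsin (1/10) * rsin t"

lemma hard_fidelity_eq: "hard_fidelity t = (99 * (1 - t\<^sup>2) + 40 * t) / (101 * (1 + t\<^sup>2))"
proof -
  have tenth: "rcos (1/10) = 99/101" "rsin (1/10) = 20/101"
    by (simp_all add: rcos_def rsin_def power2_eq_square)
  have gen: "99/101 * ((1 - t\<^sup>2) / u) + 20/101 * (2 * t / u) = (99 * (1 - t\<^sup>2) + 40 * t) / (101 * u)"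
    if "u \<noteq> 0" for u :: real
    using that by (simp add: field_simps)
  have "1 + t\<^sup>2 \<noteq> 0" using one_plus_sq_pos[of t] by simp
  then show ?thesis unfolding hard_fidelity_def tenth unfolding rcos_def rsin_def by (rule gen)
qed

lemma hard_fidelity_diff_eq:
  "hard_fidelity (1/5) - hard_fidelity (1/5 + h)
    = (h * (204/5 + 206 * h)) / (101 * (26/25) * (1 + (1/5 + h)\<^sup>2))"
proof -
  let ?D = "1 + (1/5 + h)\<^sup>2"
  have d: "101 * ?D \<noteq> 0" using one_plus_sq_pos[of "1/5 + h"] by simp
  have "hard_fidelity (1/5) - hard_fidelity (1/5 + h)
      = ((99 * (1 - (1/5)\<^sup>2) + 40 * (1/5)) * (101 * ?D)
        - (99 * (1 - (1/5 + h)\<^sup>2) + 40 * (1/5 + h)) * (101 * (1 + (1/5)\<^sup>2)))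
        / ((101 * (1 + (1/5)\<^sup>2)) * (101 * ?D))"
    unfolding hard_fidelity_eq using d by (subst diff_frac_eq) (auto simp: power2_eq_square)
  also have "\<dots> = (h * (204/5 + 206 * h) * 101) / ((101 * (26/25)) * (101 * ?D))"
    by (simp add: power2_eq_square algebra_simps)
  also have "\<dots> = (h * (204/5 + 206 * h)) / (101 * (26/25) * ?D)"
  proof -
    have "(x * 101) / ((101 * (26/25)) * (101 * y)) = x / (101 * (26/25) * y)" for x y :: real
      by (cases "y = 0") (simp_all add: field_simps)
    then show ?thesis .
  qed
  finally show ?thesis .
qed

lemma hard_fidelity_diff_gt_small:
  assumes h: "0 < h" "h \<le> 3/5"
  shows "h/5 < hard_fidelity (1/5) - hard_fidelity (1/5 + h)"
proof -
  define D where "D = 101 * (26/25) * (1 + (1/5 + h)\<^sup>2)"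
  have D0: "0 < D" unfolding D_def using one_plus_sq_pos[of "1/5 + h"] by simp
  have "(1/5 + h) * (1/5 + h) \<le> (4/5) * (4/5)" using h by (intro mult_mono) auto
  then have D1: "D \<le> 101 * (26/25) * (1 + 16/25)" unfolding D_def by (simp add: power2_eq_square)
  have "h/5 * D \<le> h/5 * (101 * (26/25) * (1 + 16/25))" using D1 h by (intro mult_left_mono) auto
  also have "\<dots> < h * (204/5 + 206 * h)"
  proof -
    have hh: "0 \<le> h * h" by simp
    have e1: "h/5 * (101 * (26/25) * (1 + 16/25)) = (107666/3125) * h" by simp
    have e2: "h * (204/5 + 206 * h) = (204/5) * h + 206 * (h * h)" by (simp add: algebra_simps)
    show ?thesis unfolding e1 e2 using hh h by linarith
  qed
  finally have "h/5 * D < h * (204/5 + 206 * h)" .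
  then have "h/5 < h * (204/5 + 206 * h) / D" using D0 by (simp add: less_divide_eq)
  then show ?thesis unfolding hard_fidelity_diff_eq D_def .
qed

lemma hard_fidelity_diff_gt_big: "1/2 < hard_fidelity (1/5) - hard_fidelity (4/5)"
  unfolding hard_fidelity_eq by (simp add: power2_eq_square)

definition hard_state :: "real \<Rightarrow> complex mat" where
  "hard_state t = diag2 ((rcos t)\<^sup>2) ((rsin t)\<^sup>2)"

definition hard_oracle :: "nat \<Rightarrow> real \<Rightarrow> complex mat" where
  "hard_oracle a t = givens_mat (2^(1+a)) (2^a + 1) (rcos t) (rsin t)"

lemma hard_oracle_plane:
  assumes "1 \<le> a"
  shows "0 < (2::nat)^a + 1" "(2::nat)^a + 1 < 2^(1+a)"
proof -
  have "2 \<le> (2::nat)^a" using assms by (metis one_le_numeral power_increasing power_one_right)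
  then show "0 < (2::nat)^a + 1" "(2::nat)^a + 1 < 2^(1+a)" by auto
qed

lemma hard_oracle_prepares: "1 \<le> a \<Longrightarrow> prepares 1 a (hard_oracle a t) (hard_state t)"
  unfolding hard_oracle_def hard_state_def by (rule givens_mat_prepares[OF _ rcos_rsin_sq_sum])

lemma hard_oracle_unitary: "1 \<le> a \<Longrightarrow> is_unitary (2^(1+a)) (hard_oracle a t)"
  using hard_oracle_prepares unfolding prepares_def by blast

lemma hard_oracle_op_dist_le:
  assumes "1 \<le> a"
  shows "op_dist_le (2^(1+a)) (hard_oracle a t) (hard_oracle a t') (2 * (t' - t))"
    and "op_dist_le (2^(1+a)) (adj (hard_oracle a t)) (adj (hard_oracle a t')) (2 * (t' - t))"
proof -
  have "(rcos t - rcos t')\<^sup>2 + (- rsin t - - rsin t')\<^sup>2 \<le> (2 * (t' - t))\<^sup>2"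
    using rcos_rsin_dist_sq_le[of t t'] by (simp add: power2_commute)
  then show "op_dist_le (2^(1+a)) (adj (hard_oracle a t)) (adj (hard_oracle a t')) (2 * (t' - t))"
    unfolding hard_oracle_def adj_givens_mat
    by (rule givens_mat_op_dist_le[OF hard_oracle_plane[OF assms]])
  show "op_dist_le (2^(1+a)) (hard_oracle a t) (hard_oracle a t') (2 * (t' - t))"
    unfolding hard_oracle_def
    by (rule givens_mat_op_dist_le[OF hard_oracle_plane[OF assms] rcos_rsin_dist_sq_le])
qed

lemma hard_state_admissible:
  assumes "1/10 \<le> t" "t \<le> 4/5"
  shows "density 2 (hard_state t)"
    and "loewner_ge 2 (hard_state t) ((1 / complex_of_real 100) \<cdot>\<^sub>m 1\<^sub>m 2)"
  unfolding hard_state_def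
  using rcos_sq_ge[of t] rsin_sq_ge[of t] assms
  by (intro density_diag2 loewner_diag2; simp add: rcos_rsin_sq_sum)+

lemma fidelity_hard_state:
  assumes "0 \<le> t" "t \<le> 1"
  shows "fidelity 2 (hard_state (1/10)) (hard_state t) = hard_fidelity t"
proof -
  have "0 \<le> rcos (1/10)" "0 \<le> rsin (1/10)" "0 \<le> rcos t" "0 \<le> rsin t"
    using assms by (auto intro: rcos_nonneg rsin_nonneg)
  then show ?thesis unfolding hard_state_def
    by (simp add: fidelity_diag2 real_sqrt_mult hard_fidelity_def mult.commute)
qed

lemma hard_fidelity_gap:
  assumes "0 < \<epsilon>" "\<epsilon> < 1/4"
  obtains h where "0 < h" "h \<le> 10 * \<epsilon>" "1/5 + h \<le> 4/5"
    "2 * \<epsilon> < hard_fidelity (1/5) - hard_fidelity (1/5 + h)"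
proof (cases "10 * \<epsilon> \<le> 3/5")
  case True
  then show ?thesis
    using that[of "10 * \<epsilon>"] hard_fidelity_diff_gt_small[of "10 * \<epsilon>"] assms by simp
next
  case False
  then show ?thesis using that[of "3/5"] hard_fidelity_diff_gt_big assms by simp
qed

theorem fidelity_estimation_query_lower_bound:
  assumes a1: "1 \<le> a1" and a2: "1 \<le> a2" and \<epsilon>: "0 < \<epsilon>" "\<epsilon> < 1/4"
    and V: "valid_alg 1 a1 a2 A" and E: "estimates_fidelity 100 1 a1 a2 \<epsilon> A"
  shows "1/120 / \<epsilon> \<le> real (nq A)"
proof -
  obtain h where h: "0 < h" "h \<le> 10 * \<epsilon>" "1/5 + h \<le> 4/5"
    and gap: "2 * \<epsilon> < hard_fidelity (1/5) - hard_fidelity (1/5 + h)"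
    using hard_fidelity_gap[OF \<epsilon>] by blast
  have success:
    "2/3 \<le> success_prob A 1 a1 a2 (hard_oracle a1 (1/10)) (hard_oracle a2 t) (hard_fidelity t) \<epsilon>"
    if "1/10 \<le> t" "t \<le> 4/5" for t
  proof -
    have "2/3 \<le> success_prob A 1 a1 a2 (hard_oracle a1 (1/10)) (hard_oracle a2 t)
        (fidelity (2^1) (hard_state (1/10)) (hard_state t)) \<epsilon>"
      using E hard_state_admissible[of "1/10"] hard_state_admissible[OF that]
        hard_oracle_prepares[OF a1] hard_oracle_prepares[OF a2]
      unfolding estimates_fidelity_def by simp
    then show ?thesis using fidelity_hard_state[of t] that by simp
  qed
  have close: "op_dist_le (2^(1+a2)) (hard_oracle a2 (1/5)) (hard_oracle a2 (1/5 + h)) (2 * h)"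
    "op_dist_le (2^(1+a2)) (adj (hard_oracle a2 (1/5))) (adj (hard_oracle a2 (1/5 + h))) (2 * h)"
    using hard_oracle_op_dist_le[OF a2, of "1/5" "1/5 + h"] by simp_all
  have "1/6 \<le> real (nq A) * (2 * h)"
    using h gap success[of "1/5"] success[of "1/5 + h"]
    by (intro query_lower_bound[OF V hard_oracle_unitary[OF a1] hard_oracle_unitary[OF a2]
          hard_oracle_unitary[OF a2] close]) auto
  also have "\<dots> \<le> real (nq A) * (20 * \<epsilon>)" using h by (intro mult_left_mono) auto
  finally show ?thesis using \<epsilon> by (simp add: field_simps)
qed

theorem mainTheorem10:
  shows "\<exists>\<kappa>0::real. \<exists>c::real. \<exists>n::nat. \<kappa>0 \<ge> 1 \<and> c > 0 \<and> n \<ge> 1 \<and>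
    (\<forall>a1 a2 (\<epsilon>::real) (A::qalg).
       n \<le> a1 \<longrightarrow> n \<le> a2 \<longrightarrow> 0 < \<epsilon> \<longrightarrow> \<epsilon> < 1/4 \<longrightarrow>
       valid_alg n a1 a2 A \<longrightarrow> estimates_fidelity \<kappa>0 n a1 a2 \<epsilon> A \<longrightarrow>
       real (nq A) \<ge> c / \<epsilon>)"
  using fidelity_estimation_query_lower_bound
  by (intro exI[of _ 100] exI[of _ "1/120"] exI[of _ 1]) auto

end
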